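(* Let $a\in\mathbb{R}$, $\sigma>0$, $\gamma>0$, $\lambda>0$, $T\ge1$, channel transition probabilities $p_{cc'}$, and let $\tilde V_t$, $t=0,\ldots,T$, be defined on $\mathbb{R}_+\times\{0,1\}$ by the folded value iteration in the context. Then for each $c\in\{0,1\}$ and each $t\in\{0,1,\ldots,T\}$, the function $\tilde\Delta\mapsto\tilde V_t(\tilde\Delta,c)$ is non-decreasing on $\mathbb{R}_+$.
   Context: $p_{01},p_{10}\in[0,1]$, $p_{00}=1-p_{01}$, $p_{11}=1-p_{10}$; $\psi(v)=e^{-v^2/(2\sigma^2)}$, $\varphi(v,s)=\psi(v-s)+\psi(v+s)$; $\mathbb{R}_+=[0,\infty)$. Folded recursion: $\tilde V_0\equiv1$, $\tilde Q_{t+1}(\tilde\Delta,c;0)=e^{\gamma\tilde\Delta^2}\sum_{c_+\in\{0,1\}}p_{cc_+}\int_{\mathbb{R}_+}\varphi(\tilde\Delta_+,a\tilde\Delta)\tilde V_t(\tilde\Delta_+,c_+)d\tilde\Delta_+$, $\tilde Q_{t+1}(\tilde\Delta,c;1)=(1-c)e^{\gamma(\lambda+\tilde\Delta^2)}\sum_{c_+}p_{cc_+}\int_{\mathbb{R}_+}\varphi(\tilde\Delta_+,a\tilde\Delta)\tilde V_t(\tilde\Delta_+,c_+)d\tilde\Delta_++2c\,e^{\gamma\lambda}\sum_{c_+}p_{cc_+}\int_{\mathbb{R}_+}\psi(\tilde\Delta_+)\tilde V_t(\tilde\Delta_+,c_+)d\tilde\Delta_+$, $\tilde V_{t+1}(\tilde\Delta,c)=\min_{u\in\{0,1\}}\tilde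 Q_{t+1}(\tilde\Delta,c;u)$. This is the value iteration of the "folded" risk-sensitive MDP for an estimation error magnitude $\tilde\Delta$ and Gilbert–Elliott channel state $c$. *)

theory Defs
  imports "HOL-Analysis.Analysis"
begin

definition psi :: "real \<Rightarrow> real \<Rightarrow> real" where
  "psi \<sigma> v = exp (- (v\<^sup>2) / (2 * \<sigma>\<^sup>2))"

definition phi :: "real \<Rightarrow> real \<Rightarrow> real \<Rightarrow> real" where
  "phi \<sigma> v s = psi \<sigma> (v - s) + psi \<sigma> (v + s)"

definition ptrans :: "real \<Rightarrow> real \<Rightarrow> nat \<Rightarrow> nat \<Rightarrow> real" where
  "ptrans p01 p10 c c' =
     (if c = 0 then (if c' = 0 then 1 - p01 else p01)
      else (if c' = 0 then p10 else 1 - p10))"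

text \<open>Folded value iteration. Values live in ennreal (integrals of nonnegative
  functions over R_+ w.r.t. Lebesgue measure, possibly infinite).
  Vt a sigma gamma lambda p01 p10 t d c is V~_t(d, c).\<close>
primrec Vt :: "real \<Rightarrow> real \<Rightarrow> real \<Rightarrow> real \<Rightarrow> real \<Rightarrow> real \<Rightarrow> nat \<Rightarrow> real \<Rightarrow> nat \<Rightarrow> ennreal" where
  "Vt a \<sigma> \<gamma> lam p01 p10 0 = (\<lambda>d c. 1)"
| "Vt a \<sigma> \<gamma> lam p01 p10 (Suc t) = (\<lambda>d c.
     min
      (ennreal (exp (\<gamma> * d\<^sup>2)) *
         (\<Sum>c'\<in>{0,1}. ennreal (ptrans p01 p10 c c') *
            (\<integral>\<^sup>+ x \<in> {0..}. ennreal (phi \<sigma> x (a * d)) * Vt a \<sigma> \<gamma> lam p01 p10 t x c' \<partial>lborel)))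
      (ennreal (1 - real c) * ennreal (exp (\<gamma> * (lam + d\<^sup>2))) *
         (\<Sum>c'\<in>{0,1}. ennreal (ptrans p01 p10 c c') *
            (\<integral>\<^sup>+ x \<in> {0..}. ennreal (phi \<sigma> x (a * d)) * Vt a \<sigma> \<gamma> lam p01 p10 t x c' \<partial>lborel))
       + ennreal (2 * real c) * ennreal (exp (\<gamma> * lam)) *
         (\<Sum>c'\<in>{0,1}. ennreal (ptrans p01 p10 c c') *
            (\<integral>\<^sup>+ x \<in> {0..}. ennreal (psi \<sigma> x) * Vt a \<sigma> \<gamma> lam p01 p10 t x c' \<partial>lborel))))"

end

(*
  By induction on t, the exponential prefactors being nondecreasing in d, everything reduces
  to: for V nondecreasing on [0, oo), the integral of phi(x, s) V(x) over [0, oo) is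
  nondecreasing in |s|.  Every phi(., s) has the same finite mass on [0, oo), that of the
  Gaussian psi, and phi(x, s') / phi(x, s) is nondecreasing in x when |s| <= |s'| (after
  cancelling Gaussian factors it is a ratio of cosh's).  So the two densities cross once:
  phi(., s') <= phi(., s) up to some point and phi(., s') > phi(., s) beyond it, and a
  nondecreasing function has the larger integral against the density whose mass sits further
  right.
*)

theory Submission
  imports Defs "HOL-Probability.Probability"
begin

lemma borel_measurable_mono_real:
  fixes f :: "real \<Rightarrow> 'b::{linorder_topology, second_countable_topology}"
  assumes "mono f"
  shows "f \<in> borel_measurable borel"
proof (rule borel_measurableI_greater)
  fix y
  have "is_interval {x. y < f x}"
    unfolding is_interval_1 using assms by (auto dest: monoD intro: less_le_trans)
  then show "{x \<in> space borel. y < f x} \<in> sets borel"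
    by (simp add: real_interval_borel_measurable)
qed

lemma ennreal_plus_diff: "0 \<le> a \<Longrightarrow> a \<le> b \<Longrightarrow> ennreal a + ennreal (b - a) = ennreal b"
  by (simp del: ennreal_plus add: ennreal_plus[symmetric])

lemma nn_integral_positive_part_balance:
  fixes f g :: "'a \<Rightarrow> real"
  assumes [measurable]: "f \<in> borel_measurable M" "g \<in> borel_measurable M" "A \<in> sets M"
    and nonneg: "\<And>x. x \<in> A \<Longrightarrow> 0 \<le> f x" "\<And>x. x \<in> A \<Longrightarrow> 0 \<le> g x"
    and mass: "(\<integral>\<^sup>+x\<in>A. f x \<partial>M) = (\<integral>\<^sup>+x\<in>A. g x \<partial>M)" "(\<integral>\<^sup>+x\<in>A. f x \<partial>M) \<noteq> \<infinity>"
  shows "(\<integral>\<^sup>+x\<in>A. ennreal (f x - g x) \<partial>M) = (\<integral>\<^sup>+x\<in>A. ennreal (g x - f x) \<partial>M)"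
proof -
  have max_split: "(ennreal (f x) + ennreal (g x - f x)) * indicator A x
      = (ennreal (g x) + ennreal (f x - g x)) * indicator A x" for x
    using nonneg[of x] by (cases "x \<in> A"; cases "f x \<le> g x") (auto simp: ennreal_plus_diff ennreal_neg)
  have "(\<integral>\<^sup>+x\<in>A. f x \<partial>M) + (\<integral>\<^sup>+x\<in>A. ennreal (g x - f x) \<partial>M)
      = (\<integral>\<^sup>+x. (ennreal (f x) + ennreal (g x - f x)) * indicator A x \<partial>M)"
    by (simp add: distrib_right nn_integral_add)
  also have "\<dots> = (\<integral>\<^sup>+x. (ennreal (g x) + ennreal (f x - g x)) * indicator A x \<partial>M)"
    by (simp only: max_split)
  also have "\<dots> = (\<integral>\<^sup>+x\<in>A. g x \<partial>M) + (\<integral>\<^sup>+x\<in>A. ennreal (f x - g x) \<partial>M)"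
    by (simp add: distrib_right nn_integral_add)
  finally show ?thesis
    using mass by (simp add: ennreal_add_left_cancel)
qed

lemma nn_integral_mono_single_crossing:
  fixes f g :: "'a::linorder \<Rightarrow> real" and W :: "'a \<Rightarrow> ennreal"
  assumes [measurable]: "f \<in> borel_measurable M" "g \<in> borel_measurable M"
      "W \<in> borel_measurable M" "A \<in> sets M"
    and nonneg: "\<And>x. x \<in> A \<Longrightarrow> 0 \<le> f x" "\<And>x. x \<in> A \<Longrightarrow> 0 \<le> g x"
    and mass: "(\<integral>\<^sup>+x\<in>A. f x \<partial>M) = (\<integral>\<^sup>+x\<in>A. g x \<partial>M)" "(\<integral>\<^sup>+x\<in>A. f x \<partial>M) \<noteq> \<infinity>"
    and crossing: "\<And>x y. x \<in> A \<Longrightarrow> y \<in> A \<Longrightarrow> g x \<le> f x \<Longrightarrow> f y < g y \<Longrightarrow> x \<le> y"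
    and W: "mono_on A W"
  shows "(\<integral>\<^sup>+x\<in>A. f x * W x \<partial>M) \<le> (\<integral>\<^sup>+x\<in>A. g x * W x \<partial>M)"
proof -
  \<comment> \<open>c separates W on {g \<le> f} from W on {f < g}; then f * W \<le> min f g * W + c * max 0 (f - g)
    and min f g * W + c * max 0 (g - f) \<le> g * W, while both positive parts have the same integral.\<close>
  define c where "c = (SUP x\<in>{x\<in>A. g x \<le> f x}. W x)"
  have below_c: "W x \<le> c" if "x \<in> A" "g x \<le> f x" for x
    unfolding c_def using that by (intro SUP_upper) auto
  have above_c: "c \<le> W y" if "y \<in> A" "f y < g y" for y
    unfolding c_def using that crossing by (intro SUP_least mono_onD[OF W]) auto
  define h where "h x = ennreal (min (f x) (g x)) * W x" for x
  have "(\<integral>\<^sup>+x\<in>A. f x * W x \<partial>M) \<le> (\<integral>\<^sup>+x\<in>A. h x + c * ennreal (f x - g x) \<partial>M)"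
  proof (intro nn_integral_mono)
    fix x
    show "ennreal (f x) * W x * indicator A x \<le> (h x + c * ennreal (f x - g x)) * indicator A x"
    proof (cases "x \<in> A \<and> g x \<le> f x")
      case True
      then have "ennreal (f x) * W x = h x + ennreal (f x - g x) * W x"
        using nonneg[of x] by (simp add: h_def ennreal_plus_diff distrib_right[symmetric])
      also have "\<dots> \<le> h x + c * ennreal (f x - g x)"
        using below_c True by (intro add_left_mono) (simp add: mult.commute mult_right_mono)
      finally show ?thesis using True by simp
    qed (auto simp: h_def indicator_def)
  qed
  also have "\<dots> = (\<integral>\<^sup>+x\<in>A. h x \<partial>M) + c * (\<integral>\<^sup>+x\<in>A. ennreal (f x - g x) \<partial>M)"
    by (simp add: h_def nn_integral_add distrib_right nn_integral_cmult mult.assoc)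
  also have "\<dots> = (\<integral>\<^sup>+x\<in>A. h x + c * ennreal (g x - f x) \<partial>M)"
    using nn_integral_positive_part_balance[OF assms(1,2,4) nonneg mass]
    by (simp add: h_def nn_integral_add distrib_right nn_integral_cmult mult.assoc)
  also have "\<dots> \<le> (\<integral>\<^sup>+x\<in>A. g x * W x \<partial>M)"
  proof (intro nn_integral_mono)
    fix x
    show "(h x + c * ennreal (g x - f x)) * indicator A x \<le> ennreal (g x) * W x * indicator A x"
    proof (cases "x \<in> A \<and> f x < g x")
      case True
      then have "h x + c * ennreal (g x - f x) \<le> h x + ennreal (g x - f x) * W x"
        using above_c True by (intro add_left_mono) (simp add: mult.commute mult_right_mono)
      also have "\<dots> = ennreal (g x) * W x"
        using nonneg[of x] True by (simp add: h_def ennreal_plus_diff distrib_right[symmetric])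
      finally show ?thesis using True by simp
    qed (auto simp: h_def indicator_def ennreal_neg)
  qed
  finally show ?thesis .
qed

lemma psi_minus: "psi \<sigma> (- v) = psi \<sigma> v"
  by (simp add: psi_def)

lemma phi_abs: "phi \<sigma> x \<bar>s\<bar> = phi \<sigma> x s"
  by (cases "s \<ge> 0") (auto simp: phi_def)

lemma psi_nonneg: "0 \<le> psi \<sigma> v"
  by (simp add: psi_def)

lemma phi_pos: "0 < phi \<sigma> x s"
  by (simp add: phi_def psi_def add_pos_pos)

lemma borel_measurable_psi[measurable]: "psi \<sigma> \<in> borel_measurable borel"
  unfolding psi_def[abs_def] by measurable

lemma borel_measurable_phi[measurable]: "(\<lambda>x. phi \<sigma> x s) \<in> borel_measurable borel"
  unfolding phi_def by measurable

lemma phi_eq_cosh: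
  assumes "\<sigma> > 0"
  shows "phi \<sigma> x s = 2 * exp (- x\<^sup>2 / (2*\<sigma>\<^sup>2)) * exp (- s\<^sup>2 / (2*\<sigma>\<^sup>2)) * cosh (x * s / \<sigma>\<^sup>2)"
proof -
  have minus: "- (x - s)\<^sup>2 / (2*\<sigma>\<^sup>2) = - x\<^sup>2 / (2*\<sigma>\<^sup>2) + - s\<^sup>2 / (2*\<sigma>\<^sup>2) + x * s / \<sigma>\<^sup>2"
    and plus: "- (x + s)\<^sup>2 / (2*\<sigma>\<^sup>2) = - x\<^sup>2 / (2*\<sigma>\<^sup>2) + - s\<^sup>2 / (2*\<sigma>\<^sup>2) + - (x * s / \<sigma>\<^sup>2)"
    using assms by (simp_all add: field_simps power2_eq_square)
  show ?thesis
    unfolding phi_def psi_def minus plus exp_add cosh_field_def by (simp add: field_simps)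
qed

lemma cosh_cross_le:
  fixes \<alpha> \<beta> x y :: real
  assumes "0 \<le> \<beta>" "\<beta> \<le> \<alpha>" "0 \<le> x" "x \<le> y"
  shows "cosh (\<alpha>*x) * cosh (\<beta>*y) \<le> cosh (\<alpha>*y) * cosh (\<beta>*x)"
proof -
  have "cosh (\<alpha>*x + \<beta>*y) \<le> cosh (\<alpha>*y + \<beta>*x)"
  proof (subst cosh_real_nonneg_le_iff)
    show "\<alpha>*x + \<beta>*y \<le> \<alpha>*y + \<beta>*x"
      using mult_right_mono[of \<beta> \<alpha> "y - x"] assms by (simp add: algebra_simps)
  qed (use assms in auto)
  moreover have "cosh (\<alpha>*x - \<beta>*y) \<le> cosh (\<alpha>*y - \<beta>*x)"
  proof -
    have "\<bar>\<alpha>*x - \<beta>*y\<bar> \<le> \<alpha>*y - \<beta>*x"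
      using assms mult_right_mono[of \<beta> \<alpha> "y + x"] mult_left_mono[of x y "\<alpha> + \<beta>"]
      by (auto simp: algebra_simps abs_if)
    then show ?thesis
      by (metis abs_ge_zero cosh_real_abs cosh_real_nonneg_le_iff order_trans)
  qed
  ultimately show ?thesis
    by (simp add: cosh_add cosh_diff)
qed

lemma phi_likelihood_ratio_mono:
  assumes "\<sigma> > 0" "0 \<le> s" "s \<le> s'" "0 \<le> x" "x \<le> y"
  shows "phi \<sigma> x s' * phi \<sigma> y s \<le> phi \<sigma> y s' * phi \<sigma> x s"
proof -
  define e where "e z = exp (- z\<^sup>2 / (2*\<sigma>\<^sup>2))" for z
  define K where "K = 4 * e x * e y * e s * e s'"
  have phi: "phi \<sigma> z t = 2 * e z * e t * cosh (t / \<sigma>\<^sup>2 * z)" for z t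
    using phi_eq_cosh[OF assms(1)] by (simp add: e_def mult.commute)
  have "cosh (s' / \<sigma>\<^sup>2 * x) * cosh (s / \<sigma>\<^sup>2 * y) \<le> cosh (s' / \<sigma>\<^sup>2 * y) * cosh (s / \<sigma>\<^sup>2 * x)"
    using assms by (intro cosh_cross_le divide_right_mono) auto
  then have "K * (cosh (s' / \<sigma>\<^sup>2 * x) * cosh (s / \<sigma>\<^sup>2 * y))
      \<le> K * (cosh (s' / \<sigma>\<^sup>2 * y) * cosh (s / \<sigma>\<^sup>2 * x))"
    by (rule mult_left_mono) (simp add: K_def e_def)
  then show ?thesis
    unfolding phi K_def by (simp add: ac_simps)
qed

lemma phi_single_crossing:
  assumes "\<sigma> > 0" "0 \<le> s" "s \<le> s'" "0 \<le> x" "0 \<le> y"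
    and "phi \<sigma> x s' \<le> phi \<sigma> x s" "phi \<sigma> y s < phi \<sigma> y s'"
  shows "x \<le> y"
proof (rule ccontr)
  assume "\<not> x \<le> y"
  then have "phi \<sigma> y s' * phi \<sigma> x s \<le> phi \<sigma> x s' * phi \<sigma> y s"
    using phi_likelihood_ratio_mono[OF assms(1-3,5)] by simp
  also have "\<dots> \<le> phi \<sigma> x s * phi \<sigma> y s"
    using assms(6) phi_pos by (simp add: mult_right_mono less_imp_le)
  also have "\<dots> < phi \<sigma> y s' * phi \<sigma> x s"
    using assms(7) phi_pos by (simp add: mult.commute)
  finally show False by simp
qed

lemma nn_integral_psi_finite:
  assumes "\<sigma> > 0"
  shows "(\<integral>\<^sup>+x. psi \<sigma> x \<partial>lborel) \<noteq> \<infinity>"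
proof -
  have "psi \<sigma> x = sqrt (2 * pi * \<sigma>\<^sup>2) * normal_density 0 \<sigma> x" for x
    using assms by (simp add: psi_def normal_density_def)
  then have "(\<integral>\<^sup>+x. psi \<sigma> x \<partial>lborel)
      = ennreal (sqrt (2 * pi * \<sigma>\<^sup>2)) * (\<integral>\<^sup>+x. normal_density 0 \<sigma> x \<partial>lborel)"
    by (simp add: ennreal_mult nn_integral_cmult)
  also have "(\<integral>\<^sup>+x. normal_density 0 \<sigma> x \<partial>lborel) = 1"
    using assms by (subst nn_integral_eq_integral) auto
  finally show ?thesis by simp
qed

lemma nn_integral_phi:
  "(\<integral>\<^sup>+x\<in>{0..}. phi \<sigma> x s \<partial>lborel) = (\<integral>\<^sup>+x. psi \<sigma> x \<partial>lborel)"
proof -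
  have "(\<integral>\<^sup>+x\<in>{0..}. phi \<sigma> x s \<partial>lborel)
      = (\<integral>\<^sup>+x\<in>{0..}. psi \<sigma> (x - s) \<partial>lborel) + (\<integral>\<^sup>+x\<in>{0..}. psi \<sigma> (x + s) \<partial>lborel)"
    by (simp add: phi_def psi_nonneg distrib_right nn_integral_add)
  also have "(\<integral>\<^sup>+x\<in>{0..}. psi \<sigma> (x + s) \<partial>lborel) = (\<integral>\<^sup>+x\<in>{..0}. psi \<sigma> (x - s) \<partial>lborel)"
    using nn_integral_real_affine[of "\<lambda>x. ennreal (psi \<sigma> (x + s)) * indicator {0..} x" "-1" 0]
    by (simp add: psi_minus[of \<sigma> "x - s" for x, symmetric] indicator_def)
  also have "(\<integral>\<^sup>+x\<in>{..0}. psi \<sigma> (x - s) \<partial>lborel) = (\<integral>\<^sup>+x\<in>{..<0}. psi \<sigma> (x - s) \<partial>lborel)"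
    by (rule nn_integral_cong_AE) (use AE_lborel_singleton[of 0] in \<open>auto simp: indicator_def\<close>)
  also have "(\<integral>\<^sup>+x\<in>{0..}. psi \<sigma> (x - s) \<partial>lborel) + \<dots> = (\<integral>\<^sup>+x. psi \<sigma> (x - s) \<partial>lborel)"
    by (subst nn_integral_add[symmetric]) (auto intro!: nn_integral_cong simp: indicator_def)
  also have "\<dots> = (\<integral>\<^sup>+x. psi \<sigma> x \<partial>lborel)"
    using nn_integral_real_affine[of "\<lambda>x. ennreal (psi \<sigma> (x - s))" 1 s] by simp
  finally show ?thesis .
qed

lemma nn_integral_phi_mono:
  fixes V :: "real \<Rightarrow> ennreal"
  assumes "\<sigma> > 0" and V: "mono_on {0..} V" and "\<bar>s\<bar> \<le> \<bar>s'\<bar>"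
  shows "(\<integral>\<^sup>+x\<in>{0..}. phi \<sigma> x s * V x \<partial>lborel) \<le> (\<integral>\<^sup>+x\<in>{0..}. phi \<sigma> x s' * V x \<partial>lborel)"
proof -
  \<comment> \<open>V itself need not be measurable; this monotone extension is.\<close>
  define W where "W x = V (max 0 x)" for x
  have "mono W"
    unfolding W_def by (intro monoI mono_onD[OF V]) auto
  then have [measurable]: "W \<in> borel_measurable lborel"
    by (simp add: borel_measurable_mono_real)
  have on_nonneg: "(\<integral>\<^sup>+x\<in>{0..}. phi \<sigma> x t * V x \<partial>lborel) = (\<integral>\<^sup>+x\<in>{0..}. phi \<sigma> x \<bar>t\<bar> * W x \<partial>lborel)" for t
    by (intro nn_integral_cong) (auto simp: W_def phi_abs indicator_def)
  have "(\<integral>\<^sup>+x\<in>{0..}. phi \<sigma> x \<bar>s\<bar> * W x \<partial>lborel) \<le> (\<integral>\<^sup>+x\<in>{0..}. phi \<sigma> x \<bar>s'\<bar> * W x \<partial>lborel)"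
  proof (rule nn_integral_mono_single_crossing)
    show "(\<integral>\<^sup>+x\<in>{0..}. phi \<sigma> x \<bar>s\<bar> \<partial>lborel) = (\<integral>\<^sup>+x\<in>{0..}. phi \<sigma> x \<bar>s'\<bar> \<partial>lborel)"
      and "(\<integral>\<^sup>+x\<in>{0..}. phi \<sigma> x \<bar>s\<bar> \<partial>lborel) \<noteq> \<infinity>"
      using nn_integral_psi_finite[OF \<open>\<sigma> > 0\<close>] by (simp_all add: nn_integral_phi)
    show "mono_on {0..} W"
      using \<open>mono W\<close> by (rule mono_imp_mono_on)
  qed (use phi_single_crossing[OF \<open>\<sigma> > 0\<close> abs_ge_zero \<open>\<bar>s\<bar> \<le> \<bar>s'\<bar>\<close>] in \<open>auto intro: less_imp_le phi_pos\<close>)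
  then show ?thesis
    unfolding on_nonneg .
qed

lemma Vt_mono_on:
  assumes "\<sigma> > 0" "0 \<le> \<gamma>"
  shows "mono_on {0..} (\<lambda>d. Vt a \<sigma> \<gamma> lam p01 p10 t d c)"
proof (induction t arbitrary: c)
  case 0
  show ?case by (simp add: mono_on_def)
next
  case (Suc t)
  show ?case
  proof (rule mono_onI)
    fix d d' :: real
    assume "d \<in> {0..}" "d' \<in> {0..}" "d \<le> d'"
    then have "\<bar>a * d\<bar> \<le> \<bar>a * d'\<bar>" and "d\<^sup>2 \<le> d'\<^sup>2"
      by (auto simp: abs_mult intro: mult_left_mono power_mono)
    then have "exp (\<gamma> * d\<^sup>2) \<le> exp (\<gamma> * d'\<^sup>2)" "exp (\<gamma> * (lam + d\<^sup>2)) \<le> exp (\<gamma> * (lam + d'\<^sup>2))"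
      and "(\<integral>\<^sup>+x\<in>{0..}. phi \<sigma> x (a * d) * Vt a \<sigma> \<gamma> lam p01 p10 t x c' \<partial>lborel)
        \<le> (\<integral>\<^sup>+x\<in>{0..}. phi \<sigma> x (a * d') * Vt a \<sigma> \<gamma> lam p01 p10 t x c' \<partial>lborel)" for c'
      using \<open>0 \<le> \<gamma>\<close> nn_integral_phi_mono[OF \<open>\<sigma> > 0\<close> Suc.IH] by (auto intro: mult_left_mono)
    then show "Vt a \<sigma> \<gamma> lam p01 p10 (Suc t) d c \<le> Vt a \<sigma> \<gamma> lam p01 p10 (Suc t) d' c"
      by (simp only: Vt.simps) (intro min.mono add_right_mono mult_mono sum_mono ennreal_leI order_refl; simp)
  qed
qed

theorem proposition4:
  fixes a \<sigma> \<gamma> lam p01 p10 :: real and T :: nat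
  assumes "\<sigma> > 0" and "\<gamma> > 0" and "lam > 0" and "T \<ge> 1"
    and "0 \<le> p01" and "p01 \<le> 1" and "0 \<le> p10" and "p10 \<le> 1"
  shows "\<forall>c\<in>{0,1}. \<forall>t\<le>T. mono_on {0..} (\<lambda>d. Vt a \<sigma> \<gamma> lam p01 p10 t d c)"
  using Vt_mono_on[OF \<open>\<sigma> > 0\<close> less_imp_le[OF \<open>\<gamma> > 0\<close>]] by blast

end
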